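(* For all $n\ge10$ and any 2-wise independent distribution $\mathcal{P}$ over $\mathbb{F}_2[X_1,\dots,X_n]$, $$\mathbb{E}_{p\sim\mathcal{P}}\big[|\hat W^p(\mathbf{0})|^2\big]=\tfrac12,\qquad \mathbb{E}_{p\sim\mathcal{P}}\big[|\hat W^p(\mathbf{e})|^2\big]\le2^{-n/2}\ \text{ for all }\mathbf{e}\in\mathbb{F}_{2^n}\setminus\{\mathbf{0}\}.$$
   Context: Elements of $\mathbb{F}_{2^n}$ are identified with $\mathbb{F}_2^n$ via a fixed basis, and $\mathrm{Tr}:\mathbb{F}_{2^n}\to\mathbb{F}_2$ is the absolute trace. For a polynomial $p$, let $N_p$ be its number of roots in $\mathbb{F}_2^n$; $W^p(\mathbf{z})=N_p^{-1/2}$ if $p(\mathbf{z})=0$ and $W^p(\mathbf{z})=0$ otherwise (so $W^p\equiv0$ if $N_p=0$); $\hat W^p(\mathbf{e})=2^{-n/2}\sum_{\mathbf{z}\in\mathbb{F}_{2^n}}W^p(\mathbf{z})(-1)^{\mathrm{Tr}(\mathbf{e}\mathbf{z})}$. A distribution $\mathcal{P}$ is 2-wise independent if for all distinct $\mathbf{x}_1,\mathbf{x}_2\in\mathbb{F}_2^n$ and $a_1,a_2\in\mathbb{F}_2$, $\Pr_{p\sim\mathcal{P}}[p(\mathbf{x}_1)=a_1\wedge p(\mathbf{x}_2)=a_2]=\tfrac14$. *)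

theory Defs
  imports "HOL-Probability.Probability" "HOL-Library.Poly_Mapping" "HOL-Library.Z2"
begin

text \<open>Multivariate polynomials over F_2 in the standard sparse representation:
  a monomial is a finitely supported exponent vector (variable index => exponent),
  a polynomial is a finitely supported map from monomials to coefficients in F_2 (type bit).
  Variables X_1..X_n are indexed 0..n-1.\<close>
type_synonym mpoly2 = "(nat \<Rightarrow>\<^sub>0 nat) \<Rightarrow>\<^sub>0 bit"

definition vars2 :: "mpoly2 \<Rightarrow> nat set" where
  "vars2 p = (\<Union>m\<in>Poly_Mapping.keys p. Poly_Mapping.keys m)"

definition eval2 :: "mpoly2 \<Rightarrow> (nat \<Rightarrow> bit) \<Rightarrow> bit" where
  "eval2 p x = (\<Sum>m\<in>Poly_Mapping.keys p.
      Poly_Mapping.lookup p m * (\<Prod>i\<in>Poly_Mapping.keys m. x i ^ Poly_Mapping.lookup m i))"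

definition F2vec :: "nat \<Rightarrow> (nat \<Rightarrow> bit) set" where
  "F2vec n = {x. \<forall>i\<ge>n. x i = 0}"

text \<open>Identification F_2^n -> F_{2^n} via a basis b_0,...,b_{n-1}.\<close>
definition emb :: "nat \<Rightarrow> (nat \<Rightarrow> 'f::field) \<Rightarrow> (nat \<Rightarrow> bit) \<Rightarrow> 'f" where
  "emb n b x = (\<Sum>i<n. (if x i = 1 then b i else 0))"

text \<open>Absolute trace of F_{2^n} over F_2 (its value lies in the prime field {0,1}).\<close>
definition trace2 :: "nat \<Rightarrow> 'f::field \<Rightarrow> 'f" where
  "trace2 n y = (\<Sum>i<n. y ^ (2 ^ i))"

definition chi :: "nat \<Rightarrow> 'f::field \<Rightarrow> real" where
  "chi n y = (if trace2 n y = 0 then 1 else -1)"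

definition Nroots :: "nat \<Rightarrow> mpoly2 \<Rightarrow> nat" where
  "Nroots n p = card {x \<in> F2vec n. eval2 p x = 0}"

text \<open>W^p(z) for z = emb x.\<close>
definition W :: "nat \<Rightarrow> mpoly2 \<Rightarrow> (nat \<Rightarrow> bit) \<Rightarrow> real" where
  "W n p x = (if eval2 p x = 0 then 1 / sqrt (real (Nroots n p)) else 0)"

text \<open>hat W^p(e) = 2^{-n/2} * sum over z in F_{2^n} of W^p(z) (-1)^{Tr(e z)};
  the sum over z is taken via the bijection emb from F_2^n.\<close>
definition What :: "nat \<Rightarrow> (nat \<Rightarrow> 'f::field) \<Rightarrow> mpoly2 \<Rightarrow> 'f \<Rightarrow> real" where
  "What n b p e = 2 powr (- real n / 2) *
     (\<Sum>x\<in>F2vec n. W n p x * chi n (e * emb n b x))"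

definition two_wise_independent :: "nat \<Rightarrow> mpoly2 pmf \<Rightarrow> bool" where
  "two_wise_independent n P \<longleftrightarrow>
     (\<forall>x1\<in>F2vec n. \<forall>x2\<in>F2vec n. \<forall>a1 a2 :: bit. x1 \<noteq> x2 \<longrightarrow>
        measure_pmf.prob P {p. eval2 p x1 = a1 \<and> eval2 p x2 = a2} = 1/4)"

end

(*
  Let Z_p be the zero set of p in F_2^n and S_p(e) the sum of (-1)^Tr(e z) over z in Z_p, so that
  |W^p(e)|^2 = 2^-n S_p(e)^2 / |Z_p|.  For e = 0 this is 2^-n |Z_p|, and by 2-wise independence
  every point is a zero with probability 1/2, so E |Z_p| = 2^n / 2.  For e /= 0 we bound
  S^2 / |Z_p| <= |S| and E |S| <= sqrt (E S^2).  Pairwise independence gives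
  E S^2 = ((sum psi)^2 + sum psi^2) / 4 for psi z = (-1)^Tr(e z), and sum psi = 0 because the trace
  is a nonzero additive map onto F_2 (as a polynomial it has degree 2^(n-1) < 2^n).  Hence
  E S^2 = 2^n / 4 and E |W^p(e)|^2 <= 2^(-n/2) / 2.
*)

theory Submission
  imports Defs "HOL-Number_Theory.Residues" "HOL-Computational_Algebra.Polynomial"
begin

section \<open>Characteristic two and the trace\<close>

lemma CHAR_eq_2_if_card_eq_power_2:
  assumes "CARD('f::{field,finite}) = 2 ^ n" "n \<ge> 1"
  shows "CHAR('f) = 2"
proof -
  have "prime CHAR('f)"
    by (intro prime_CHAR_semidom finite_imp_CHAR_pos) simp
  moreover have "CHAR('f) dvd 2 ^ n"
    using CHAR_dvd_CARD[where 'a='f] assms(1) by simp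
  ultimately show ?thesis
    by (metis prime_dvd_power_nat primes_dvd_imp_eq two_is_prime_nat)
qed

text \<open>The library's \<open>finite_field_power_card_eq_same\<close> needs the sort \<open>finite_field\<close>,
  which a type variable of sort \<open>{field, finite}\<close> does not carry.\<close>

lemma field_power_card_eq_same:
  fixes y :: "'f::{field,finite}"
  shows "y ^ CARD('f) = y"
proof (cases "y = 0")
  case False
  have "(\<Prod>x\<in>UNIV - {0}. y * x) = (\<Prod>x\<in>UNIV - {0::'f}. x)"
    by (rule prod.reindex_bij_witness[of _ "\<lambda>x. x / y" "\<lambda>x. y * x"]) (use False in auto)
  then have "y ^ (CARD('f) - 1) = 1"
    by (simp add: prod.distrib card_Diff_subset)
  then show ?thesis
    by (metis finite_UNIV_card_ge_0 finite power_eq_if mult.right_neutral not_gr0)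
qed (simp add: finite_UNIV_card_ge_0)

lemma trace2_add:
  assumes "CHAR('f::field) = 2"
  shows "trace2 n (x + y :: 'f) = trace2 n x + trace2 n y"
  unfolding trace2_def using freshmans_dream'[where 'a='f] assms by (simp add: sum.distrib)

lemma trace2_eq_0_or_1:
  fixes y :: "'f::{field,finite}"
  assumes "CARD('f) = 2 ^ n" "n \<ge> 1"
  shows "trace2 n y = 0 \<or> trace2 n y = 1"
proof -
  have char: "CHAR('f) = 2"
    using CHAR_eq_2_if_card_eq_power_2 assms by blast
  have "(trace2 n y)\<^sup>2 = (\<Sum>i<n. (y ^ 2 ^ i)\<^sup>2)"
    unfolding trace2_def by (rule freshmans_dream_sum) (simp_all add: char)
  also have "\<dots> = (\<Sum>i<n. y ^ 2 ^ Suc i)"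
    by (simp add: power_mult[symmetric] mult.commute)
  also have "\<dots> = (\<Sum>i<Suc n. y ^ 2 ^ i) - y"
    by (subst sum.lessThan_Suc_shift) simp
  also have "\<dots> = trace2 n y"
    using field_power_card_eq_same[of y] assms(1) by (simp add: trace2_def)
  finally show ?thesis
    by (simp add: power2_eq_square)
qed

lemma trace2_not_identically_zero:
  assumes "CARD('f::{field,finite}) = 2 ^ n" "n \<ge> 1"
  shows "\<exists>y::'f. trace2 n y \<noteq> 0"
proof -
  define Q :: "'f poly" where "Q = (\<Sum>i<n. Polynomial.monom 1 (2 ^ i))"
  have poly_Q: "poly Q y = trace2 n y" for y
    by (simp add: Q_def poly_sum poly_monom trace2_def)
  have "Polynomial.coeff Q (2 ^ (n - 1)) = (\<Sum>i<n. if 2 ^ i = (2::nat) ^ (n - 1) then 1 else 0)"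
    by (simp add: Q_def coeff_sum coeff_monom)
  also have "\<dots> = (\<Sum>i\<in>{n - 1}. 1)"
    by (rule sum.mono_neutral_cong_right) (use assms(2) in auto)
  finally have "Q \<noteq> 0" by auto
  moreover have "Polynomial.degree Q \<le> 2 ^ (n - 1)"
    unfolding Q_def by (rule degree_sum_le) (auto intro: order.trans[OF degree_monom_le])
  ultimately have "card {y. poly Q y = 0} < CARD('f)"
    using card_poly_roots_bound[of Q] assms by (simp add: le_less_trans)
  then have "{y. poly Q y = 0} \<noteq> UNIV" by auto
  then show ?thesis by (auto simp: poly_Q)
qed

lemma sum_chi_eq_0:
  assumes "CARD('f::{field,finite}) = 2 ^ n" "n \<ge> 1"
  shows "(\<Sum>w::'f\<in>UNIV. chi n w) = 0"
proof -
  have char: "CHAR('f) = 2"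
    using CHAR_eq_2_if_card_eq_power_2 assms by blast
  obtain y :: 'f where "trace2 n y \<noteq> 0"
    using trace2_not_identically_zero[OF assms] by blast
  then have y: "trace2 n y = 1"
    using trace2_eq_0_or_1[OF assms] by blast
  have "(1::'f) + 1 = 0"
    using of_nat_CHAR[where 'a='f] char by simp
  then have flip: "chi n (w + y) = - chi n w" for w :: 'f
    using trace2_eq_0_or_1[OF assms, of w] trace2_add[OF char, of n w y] y
    by (auto simp: chi_def)
  have "(\<Sum>w::'f\<in>UNIV. chi n w) = (\<Sum>w\<in>UNIV. chi n (w + y))"
    by (rule sum.reindex_bij_witness[of _ "\<lambda>w. w + y" "\<lambda>w. w - y"]) auto
  also have "\<dots> = - (\<Sum>w::'f\<in>UNIV. chi n w)"
    by (simp add: flip sum_negf)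
  finally show ?thesis by simp
qed

lemma sum_chi_mult_emb_eq_0:
  fixes b :: "nat \<Rightarrow> 'f::{field,finite}"
  assumes "CARD('f) = 2 ^ n" "n \<ge> 1" "bij_betw (emb n b) (F2vec n) UNIV" "e \<noteq> 0"
  shows "(\<Sum>x\<in>F2vec n. chi n (e * emb n b x)) = 0"
proof -
  have "(\<Sum>x\<in>F2vec n. chi n (e * emb n b x)) = (\<Sum>z\<in>UNIV. chi n (e * z))"
    by (rule sum.reindex_bij_betw[OF assms(3)])
  also have "\<dots> = (\<Sum>w::'f\<in>UNIV. chi n w)"
    by (rule sum.reindex_bij_witness[of _ "\<lambda>w. w / e" "\<lambda>z. e * z"]) (use assms(4) in auto)
  also have "\<dots> = 0"
    by (rule sum_chi_eq_0[OF assms(1,2)])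
  finally show ?thesis .
qed

section \<open>Moments of sums over the zero set\<close>

lemma finite_F2vec [simp]: "finite (F2vec n)"
proof -
  have "F2vec n = {x. \<forall>i. (i \<in> {..<n} \<longrightarrow> x i \<in> UNIV) \<and> (i \<notin> {..<n} \<longrightarrow> x i = 0)}"
    by (auto simp: F2vec_def)
  moreover have "finite (UNIV :: bit set)"
  proof -
    have "(UNIV :: bit set) = {0, 1}"
      using bit_not_zero_iff by blast
    then show ?thesis
      by (metis finite.emptyI finite.insertI)
  qed
  ultimately show ?thesis
    using finite_set_of_finite_funs[of "{..<n}" UNIV 0] by simp
qed

definition zeros2 :: "nat \<Rightarrow> mpoly2 \<Rightarrow> (nat \<Rightarrow> bit) set" where
  "zeros2 n p = {x \<in> F2vec n. eval2 p x = 0}"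

lemma sum_zeros2_eq_sum_indicator:
  fixes f :: "(nat \<Rightarrow> bit) \<Rightarrow> real"
  shows "(\<Sum>x\<in>zeros2 n p. f x) = (\<Sum>x\<in>F2vec n. indicator {p. eval2 p x = 0} p * f x)"
proof -
  have "(\<Sum>x\<in>zeros2 n p. f x) = (\<Sum>x\<in>F2vec n. if eval2 p x = 0 then f x else 0)"
    unfolding zeros2_def by (rule sum.inter_filter) simp
  also have "\<dots> = (\<Sum>x\<in>F2vec n. indicator {p. eval2 p x = 0} p * f x)"
    by (intro sum.cong refl) (simp add: indicator_def)
  finally show ?thesis .
qed

lemma two_wise_independent_prob_zero:
  assumes "two_wise_independent n P" "n \<ge> 1" "x \<in> F2vec n"
  shows "measure_pmf.prob P {p. eval2 p x = 0} = 1 / 2"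
proof -
  define x' where "x' = x(0 := x 0 + 1)"
  have "x' \<in> F2vec n"
    using assms(2,3) by (auto simp: F2vec_def x'_def)
  moreover have "x' \<noteq> x"
    by (metis add_cancel_right_right fun_upd_same one_neq_zero x'_def)
  ultimately have quarter: "measure_pmf.prob P {p. eval2 p x = 0 \<and> eval2 p x' = a} = 1 / 4" for a
    using assms(1,3) unfolding two_wise_independent_def by (metis (no_types))
  have "{p. eval2 p x = 0} = {p. eval2 p x = 0 \<and> eval2 p x' = 0} \<union> {p. eval2 p x = 0 \<and> eval2 p x' = 1}"
    by auto
  then have "measure_pmf.prob P {p. eval2 p x = 0}
      = measure_pmf.prob P {p. eval2 p x = 0 \<and> eval2 p x' = 0}
        + measure_pmf.prob P {p. eval2 p x = 0 \<and> eval2 p x' = 1}"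
    by (simp add: measure_pmf.finite_measure_Union disjoint_iff)
  then show ?thesis
    by (simp add: quarter)
qed

lemma two_wise_independent_prob_common_zero:
  assumes "two_wise_independent n P" "n \<ge> 1" "x \<in> F2vec n" "y \<in> F2vec n"
  shows "measure_pmf.prob P ({p. eval2 p x = 0} \<inter> {p. eval2 p y = 0}) = (if x = y then 1 / 2 else 1 / 4)"
  using assms two_wise_independent_prob_zero[OF assms(1-3)]
  by (auto simp: two_wise_independent_def Int_def)

lemma integrable_indicator_mult_pmf:
  "integrable (measure_pmf P) (\<lambda>p. indicator A p * c :: real)"
  by (simp add: measure_pmf.emeasure_finite less_top[symmetric])

lemma expectation_sum_zeros2:
  fixes f :: "(nat \<Rightarrow> bit) \<Rightarrow> real"
  assumes "two_wise_independent n P" "n \<ge> 1"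
  shows "measure_pmf.expectation P (\<lambda>p. \<Sum>x\<in>zeros2 n p. f x) = (\<Sum>x\<in>F2vec n. f x) / 2"
proof -
  have "measure_pmf.expectation P (\<lambda>p. \<Sum>x\<in>zeros2 n p. f x)
      = (\<Sum>x\<in>F2vec n. measure_pmf.expectation P (\<lambda>p. indicator {p. eval2 p x = 0} p * f x))"
    unfolding sum_zeros2_eq_sum_indicator
    by (rule Bochner_Integration.integral_sum) (rule integrable_indicator_mult_pmf)
  also have "\<dots> = (\<Sum>x\<in>F2vec n. f x / 2)"
    by (intro sum.cong refl) (simp add: two_wise_independent_prob_zero[OF assms])
  finally show ?thesis
    by (simp add: sum_divide_distrib)
qed

lemma expectation_sq_sum_zeros2:
  fixes f :: "(nat \<Rightarrow> bit) \<Rightarrow> real"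
  assumes "two_wise_independent n P" "n \<ge> 1"
  shows "measure_pmf.expectation P (\<lambda>p. (\<Sum>x\<in>zeros2 n p. f x)\<^sup>2)
    = ((\<Sum>x\<in>F2vec n. f x)\<^sup>2 + (\<Sum>x\<in>F2vec n. (f x)\<^sup>2)) / 4"
proof -
  let ?A = "\<lambda>x. {p. eval2 p x = 0}"
  have sq: "(\<Sum>x\<in>zeros2 n p. f x)\<^sup>2
      = (\<Sum>x\<in>F2vec n. \<Sum>y\<in>F2vec n. indicator (?A x \<inter> ?A y) p * (f x * f y))" for p
    unfolding sum_zeros2_eq_sum_indicator power2_eq_square sum_product
    by (intro sum.cong refl) (simp add: indicator_inter_arith mult_ac)
  have "measure_pmf.expectation P (\<lambda>p. (\<Sum>x\<in>zeros2 n p. f x)\<^sup>2)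
      = (\<Sum>x\<in>F2vec n. measure_pmf.expectation P
          (\<lambda>p. \<Sum>y\<in>F2vec n. indicator (?A x \<inter> ?A y) p * (f x * f y)))"
    unfolding sq by (intro Bochner_Integration.integral_sum
      Bochner_Integration.integrable_sum integrable_indicator_mult_pmf)
  also have "\<dots> = (\<Sum>x\<in>F2vec n. \<Sum>y\<in>F2vec n.
      measure_pmf.expectation P (\<lambda>p. indicator (?A x \<inter> ?A y) p * (f x * f y)))"
    by (intro sum.cong refl Bochner_Integration.integral_sum integrable_indicator_mult_pmf)
  also have "\<dots> = (\<Sum>x\<in>F2vec n. \<Sum>y\<in>F2vec n. measure_pmf.prob P (?A x \<inter> ?A y) * (f x * f y))"
    by simp
  also have "\<dots> = (\<Sum>x\<in>F2vec n. \<Sum>y\<in>F2vec n. f x * f y / 4 + (if x = y then (f x)\<^sup>2 / 4 else 0))"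
    by (intro sum.cong refl)
      (auto simp: two_wise_independent_prob_common_zero[OF assms] power2_eq_square)
  also have "\<dots> = (\<Sum>x\<in>F2vec n. \<Sum>y\<in>F2vec n. f x * f y / 4) + (\<Sum>x\<in>F2vec n. (f x)\<^sup>2 / 4)"
    by (simp add: sum.distrib sum.delta' cong: sum.cong)
  finally show ?thesis
    by (simp add: sum_product power2_eq_square sum_divide_distrib add_divide_distrib)
qed

section \<open>The Fourier coefficients\<close>

lemma two_powr_minus_half: "2 powr (- real n / 2) = 1 / sqrt (2 ^ n)"
proof -
  have "sqrt (2 ^ n) = (2 powr real n) powr (1 / 2)"
    by (simp add: powr_half_sqrt powr_realpow)
  also have "\<dots> = 2 powr (real n / 2)"
    by (simp add: powr_powr)
  finally show ?thesis
    by (simp add: powr_minus_divide)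
qed

lemma chi_zero [simp]: "chi n 0 = 1"
  by (simp add: chi_def trace2_def power_0_left)

lemma abs_chi [simp]: "\<bar>chi n y\<bar> = 1"
  by (simp add: chi_def)

lemma chi_sq [simp]: "(chi n y)\<^sup>2 = 1"
  by (simp add: chi_def)

lemma What_eq_sum_zeros2:
  "What n b p e
    = 2 powr (- real n / 2) * (\<Sum>x\<in>zeros2 n p. chi n (e * emb n b x)) / sqrt (card (zeros2 n p))"
proof -
  have "(\<Sum>x\<in>zeros2 n p. chi n (e * emb n b x)) / sqrt (card (zeros2 n p))
      = (\<Sum>x\<in>F2vec n. if eval2 p x = 0
           then chi n (e * emb n b x) / sqrt (card (zeros2 n p)) else 0)"
    unfolding sum_divide_distrib by (subst (1) zeros2_def, rule sum.inter_filter) simp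
  also have "\<dots> = (\<Sum>x\<in>F2vec n. W n p x * chi n (e * emb n b x))"
    by (intro sum.cong refl) (simp add: W_def Nroots_def zeros2_def)
  finally show ?thesis
    by (metis What_def times_divide_eq_right)
qed

lemma What_zero_sq: "(What n b p 0)\<^sup>2 = card (zeros2 n p) / 2 ^ n"
  unfolding What_eq_sum_zeros2 two_powr_minus_half
  by (simp add: power_divide power_mult_distrib) (simp add: power2_eq_square)

lemma What_sq_le:
  "(What n b p e)\<^sup>2 \<le> \<bar>\<Sum>x\<in>zeros2 n p. chi n (e * emb n b x)\<bar> / 2 ^ n"
proof -
  define S where "S = (\<Sum>x\<in>zeros2 n p. chi n (e * emb n b x))"
  define N where "N = real (card (zeros2 n p))"
  have "\<bar>S\<bar> \<le> N"
    unfolding S_def N_def using sum_abs[of "\<lambda>x. chi n (e * emb n b x)" "zeros2 n p"] by simp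
  then have "S\<^sup>2 \<le> \<bar>S\<bar> * N"
    by (metis abs_ge_zero mult_left_mono power2_abs power2_eq_square)
  then have "S\<^sup>2 / N \<le> \<bar>S\<bar>"
    by (cases "N = 0") (auto simp: N_def divide_le_eq mult.commute)
  have "(What n b p e)\<^sup>2 = S\<^sup>2 / N / 2 ^ n"
    unfolding What_eq_sum_zeros2 two_powr_minus_half S_def N_def
    by (simp add: power_divide power_mult_distrib)
  also have "\<dots> \<le> \<bar>S\<bar> / 2 ^ n"
    by (rule divide_right_mono) (fact, simp)
  finally show ?thesis
    unfolding S_def .
qed

lemma (in prob_space) expectation_abs_le_sqrt_expectation_sq:
  fixes X :: "'a \<Rightarrow> real"
  assumes "integrable M X" "integrable M (\<lambda>x. (X x)\<^sup>2)"
  shows "expectation (\<lambda>x. \<bar>X x\<bar>) \<le> sqrt (expectation (\<lambda>x. (X x)\<^sup>2))"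
proof -
  have "0 \<le> variance (\<lambda>x. \<bar>X x\<bar>)"
    by (rule variance_positive)
  also have "\<dots> = expectation (\<lambda>x. (X x)\<^sup>2) - (expectation (\<lambda>x. \<bar>X x\<bar>))\<^sup>2"
    using variance_eq[of "\<lambda>x. \<bar>X x\<bar>"] assms by simp
  finally show ?thesis
    by (simp add: real_le_rsqrt)
qed

lemma integrable_fun_zeros2:
  fixes g :: "(nat \<Rightarrow> bit) set \<Rightarrow> real"
  shows "integrable (measure_pmf P) (\<lambda>p. g (zeros2 n p))"
proof (rule measure_pmf.integrable_const_bound)
  have "zeros2 n p \<in> Pow (F2vec n)" for p
    by (auto simp: zeros2_def)
  then show "AE p in measure_pmf P. norm (g (zeros2 n p)) \<le> Max ((\<lambda>Z. \<bar>g Z\<bar>) ` Pow (F2vec n))"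
    by (auto intro: Max_ge)
qed simp

lemma expectation_abs_What_zero_sq:
  assumes "two_wise_independent n P" "n \<ge> 1"
  shows "measure_pmf.expectation P (\<lambda>p. \<bar>What n b p 0\<bar>\<^sup>2) = card (F2vec n) / 2 / 2 ^ n"
proof -
  have "measure_pmf.expectation P (\<lambda>p. \<bar>What n b p 0\<bar>\<^sup>2)
      = measure_pmf.expectation P (\<lambda>p. \<Sum>x\<in>zeros2 n p. 1) / 2 ^ n"
    by (simp add: What_zero_sq)
  also have "\<dots> = card (F2vec n) / 2 / 2 ^ n"
    using expectation_sum_zeros2[OF assms, of "\<lambda>_. 1"] by (simp add: field_simps)
  finally show ?thesis .
qed

lemma expectation_abs_What_sq_le:
  "measure_pmf.expectation P (\<lambda>p. \<bar>What n b p e\<bar>\<^sup>2)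
    \<le> sqrt (measure_pmf.expectation P (\<lambda>p. (\<Sum>x\<in>zeros2 n p. chi n (e * emb n b x))\<^sup>2)) / 2 ^ n"
proof -
  let ?S = "\<lambda>Z. \<Sum>x\<in>Z. chi n (e * emb n b x)"
  have "measure_pmf.expectation P (\<lambda>p. \<bar>What n b p e\<bar>\<^sup>2)
      \<le> measure_pmf.expectation P (\<lambda>p. \<bar>?S (zeros2 n p)\<bar> / 2 ^ n)"
  proof (rule integral_mono)
    show "integrable (measure_pmf P) (\<lambda>p. \<bar>What n b p e\<bar>\<^sup>2)"
      unfolding What_eq_sum_zeros2
      by (rule integrable_fun_zeros2[where g = "\<lambda>Z. \<bar>2 powr (- real n / 2) * ?S Z / sqrt (card Z)\<bar>\<^sup>2"])
  qed (simp_all add: What_sq_le integrable_fun_zeros2)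
  also have "\<dots> = measure_pmf.expectation P (\<lambda>p. \<bar>?S (zeros2 n p)\<bar>) / 2 ^ n"
    by simp
  also have "\<dots> \<le> sqrt (measure_pmf.expectation P (\<lambda>p. (?S (zeros2 n p))\<^sup>2)) / 2 ^ n"
    by (intro divide_right_mono measure_pmf.expectation_abs_le_sqrt_expectation_sq integrable_fun_zeros2)
      simp
  finally show ?thesis .
qed

theorem mainTheorem5:
  fixes n :: nat and P :: "mpoly2 pmf" and b :: "nat \<Rightarrow> 'f::{field,finite}"
  assumes n: "n \<ge> 10"
    and card: "CARD('f) = 2 ^ n"
    and basis: "bij_betw (emb n b) (F2vec n) (UNIV :: 'f set)"
    and polys: "\<forall>p\<in>set_pmf P. vars2 p \<subseteq> {..<n}"
    and indep: "two_wise_independent n P"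
  shows "measure_pmf.expectation P (\<lambda>p. \<bar>What n b p 0\<bar>^2) = 1/2 \<and>
         (\<forall>e::'f. e \<noteq> 0 \<longrightarrow>
           measure_pmf.expectation P (\<lambda>p. \<bar>What n b p e\<bar>^2) \<le> 2 powr (- real n / 2))"
proof (intro conjI allI impI)
  have n1: "n \<ge> 1"
    using n by simp
  have card_F2vec: "card (F2vec n) = 2 ^ n"
    using bij_betw_same_card[OF basis] card by simp
  show "measure_pmf.expectation P (\<lambda>p. \<bar>What n b p 0\<bar>^2) = 1/2"
    using expectation_abs_What_zero_sq[OF indep n1] card_F2vec by simp
  fix e :: 'f
  assume "e \<noteq> 0"
  have second_moment: "measure_pmf.expectation P (\<lambda>p. (\<Sum>x\<in>zeros2 n p. chi n (e * emb n b x))\<^sup>2)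
      = 2 ^ n / 4"
    using expectation_sq_sum_zeros2[OF indep n1] sum_chi_mult_emb_eq_0[OF card n1 basis \<open>e \<noteq> 0\<close>]
      card_F2vec by simp
  have "measure_pmf.expectation P (\<lambda>p. \<bar>What n b p e\<bar>^2) \<le> sqrt (2 ^ n / 4) / 2 ^ n"
    using expectation_abs_What_sq_le[of P n b e] unfolding second_moment .
  also have "\<dots> = 2 powr (- real n / 2) / 2"
  proof -
    have "sqrt (2 ^ n) * sqrt (2 ^ n) = (2::real) ^ n"
      by simp
    then show ?thesis
      unfolding two_powr_minus_half real_sqrt_divide by (simp add: field_simps)
  qed
  also have "\<dots> \<le> 2 powr (- real n / 2)"
    by simp
  finally show "measure_pmf.expectation P (\<lambda>p. \<bar>What n b p e\<bar>^2) \<le> 2 powr (- real n / 2)" .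
qed

end
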